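(* Let $X_1,\dots,X_n$ be i.i.d. copies of a random variable $X$ satisfying the IHR assumption, with order statistics $X_{(1)}\ge\cdots\ge X_{(n)}$, let $k\in\{2,\dots,n\}$, and let $S_{k-1}:=X_{(k-1)}-X_{(k)}$. Then $X_{(k)}$ and $S_{k-1}$ are negatively associated: for every pair of non-increasing functions $f_1,f_2:\mathbb{R}\to\mathbb{R}$ (for which the expectations exist), $$\mathbb{E}\big[f_1(X_{(k)})f_2(S_{k-1})\big]\le\mathbb{E}\big[f_1(X_{(k)})\big]\,\mathbb{E}\big[f_2(S_{k-1})\big].$$
   Context: $X$ is a continuous real random variable with support $[0,\infty)$, density $f$, c.d.f. $F$ and hazard rate $h=f/(1-F)$; IHR assumption: $h$ non-decreasing on $[0,\infty)$ and $L:=\inf_x h(x)>0$. Order statistics are sorted decreasingly. *)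

theory Defs
  imports "HOL-Probability.Probability"
begin

definition cdf_of_density :: "(real \<Rightarrow> real) \<Rightarrow> real \<Rightarrow> real" where
  "cdf_of_density f x = (LINT t:{..x}|lborel. f t)"

definition hazard :: "(real \<Rightarrow> real) \<Rightarrow> real \<Rightarrow> real" where
  "hazard f x = f x / (1 - cdf_of_density f x)"

definition IHR_density :: "(real \<Rightarrow> real) \<Rightarrow> bool" where
  "IHR_density f \<longleftrightarrow>
     f \<in> borel_measurable lborel \<and> (\<forall>x. 0 \<le> f x) \<and> (\<forall>x<0. f x = 0) \<and>
     integrable lborel f \<and> (LINT t|lborel. f t) = 1 \<and>
     (\<forall>x. cdf_of_density f x < 1) \<and>
     mono_on {0..} (hazard f) \<and>
     (INF x\<in>{0..}. hazard f x) > 0"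

definition ord_stat :: "nat \<Rightarrow> nat \<Rightarrow> (nat \<Rightarrow> real) \<Rightarrow> real" where
  "ord_stat n k x = rev (sort (map x [0..<n])) ! (k - 1)"

end

theory Submission
  imports Defs
begin

(* For distinct observations the event {X_(k) in A, S_(k-1) in J} is the disjoint union,
   over the index i of X_(k) and the set T of the k - 1 indices above it, of events whose
   probabilities factor by independence: each has probability
   int_A f(y) G_J(y)^(k-1) F(y)^(n-k) dy, where G_J(y) = P(X > y, X - y in J).
   For an upper set J, G_J is either 0 or a shifted survival function y |-> Fbar(y + b),
   and the IHR assumption makes Fbar(y + b) / Fbar(y) non-increasing on [0, oo).
   Splitting the y-integral at an upper set I, where this ratio separates from its values
   on the complement, gives P(X_(k) in I, S in J) <= P(X_(k) in I) P(S in J).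
   Layer-cake integration turns this negative dependence of upper sets into the
   covariance inequality, first for non-negative non-decreasing functions and then, after
   subtracting from constants, for non-increasing ones. *)

section \<open>Order statistics of distinct values\<close>

definition upper_set :: "'a::order set \<Rightarrow> bool" where
  "upper_set J \<longleftrightarrow> (\<forall>a\<in>J. \<forall>b\<ge>a. b \<in> J)"

lemma upper_setD: "upper_set J \<Longrightarrow> a \<in> J \<Longrightarrow> a \<le> b \<Longrightarrow> b \<in> J"
  by (auto simp: upper_set_def)

lemma upper_set_separating_constant:
  fixes \<psi> :: "real \<Rightarrow> real" and I :: "real set"
  assumes I: "upper_set I" and \<psi>_antimono: "\<And>x y. 0 \<le> x \<Longrightarrow> x \<le> y \<Longrightarrow> \<psi> y \<le> \<psi> x"
    and \<psi>_nonneg: "\<And>x. 0 \<le> \<psi> x"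
  obtains m where "0 \<le> m" "\<And>x. x \<in> I \<Longrightarrow> 0 \<le> x \<Longrightarrow> \<psi> x \<le> m"
    "\<And>y. y \<notin> I \<Longrightarrow> 0 \<le> y \<Longrightarrow> m \<le> \<psi> y"
proof (cases "{y. y \<notin> I \<and> 0 \<le> y} = {}")
  case True
  show ?thesis by (rule that[of "\<psi> 0"]) (use True \<psi>_antimono \<psi>_nonneg in auto)
next
  case False
  have "y \<le> x" if "x \<in> I" "y \<notin> I" for x y
    using I that by (meson linear upper_setD)
  then show ?thesis
    using False \<psi>_nonneg \<psi>_antimono
    by (intro that[of "Inf (\<psi> ` {y. y \<notin> I \<and> 0 \<le> y})"] cInf_greatest cInf_lower
        bdd_belowI[of _ 0]) auto
qed

lemma card_greater_nth_strict_sorted: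
  fixes s :: "'a::linorder list"
  assumes "sorted_wrt (<) s" "p < length s"
  shows "card {w \<in> set s. s!p < w} = length s - 1 - p"
proof -
  have "{w \<in> set s. s!p < w} = (!) s ` {p<..<length s}"
  proof (intro set_eqI iffI)
    fix w assume "w \<in> {w \<in> set s. s!p < w}"
    then obtain q where q: "q < length s" "w = s!q" "s!p < w" by (auto simp: in_set_conv_nth)
    have "p < q"
    proof (rule ccontr)
      assume "\<not> p < q"
      then have "s!q \<le> s!p" using assms q
        by (metis linorder_not_less order.order_iff_strict sorted_wrt_nth_less)
      then show False using q by simp
    qed
    then show "w \<in> (!) s ` {p<..<length s}" using q by auto
  next
    fix w assume "w \<in> (!) s ` {p<..<length s}"
    then obtain q where "p < q" "q < length s" "w = s!q" by auto
    then show "w \<in> {w \<in> set s. s!p < w}" using assms sorted_wrt_nth_less by fastforce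
  qed
  moreover have "inj_on ((!) s) {p<..<length s}"
    using assms(1) by (auto simp: inj_on_def strict_sorted_iff nth_eq_iff_index_eq)
  ultimately show ?thesis by (simp add: card_image)
qed

lemma ord_stat_conv_sort:
  "1 \<le> m \<Longrightarrow> m \<le> n \<Longrightarrow> ord_stat n m z = sort (map z [0..<n]) ! (n - m)"
  by (simp add: ord_stat_def rev_nth)

lemma strict_sorted_sort_map_inj:
  "inj_on z {0..<n} \<Longrightarrow> sorted_wrt (<) (sort (map z [0..<n]))"
  by (simp add: strict_sorted_iff distinct_map)

lemma ord_stat_mem: "1 \<le> m \<Longrightarrow> m \<le> n \<Longrightarrow> ord_stat n m z \<in> z ` {0..<n}"
proof -
  assume "1 \<le> m" "m \<le> n"
  then have "sort (map z [0..<n]) ! (n - m) \<in> set (sort (map z [0..<n]))"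
    by (intro nth_mem) simp
  then show ?thesis using \<open>1 \<le> m\<close> \<open>m \<le> n\<close> by (simp add: ord_stat_conv_sort)
qed

lemma ord_stat_le_pred: "2 \<le> k \<Longrightarrow> k \<le> n \<Longrightarrow> ord_stat n k z \<le> ord_stat n (k - 1) z"
  by (simp add: ord_stat_conv_sort Suc_diff_le sorted_nth_mono)

lemma card_greater_image:
  "inj_on z {0..<n} \<Longrightarrow> card {w \<in> z ` {0..<n}. v < w} = card {j \<in> {0..<n}. v < z j}"
proof -
  assume inj: "inj_on z {0..<n}"
  have "{w \<in> z ` {0..<n}. v < w} = z ` {j\<in>{0..<n}. v < z j}" by auto
  moreover have "inj_on z {j\<in>{0..<n}. v < z j}" using inj by (rule inj_on_subset) auto
  ultimately show ?thesis by (simp add: card_image)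
qed

lemma sorted_nth_le_iff_card_greater:
  fixes s :: "'a::linorder list"
  assumes s: "sorted s" and k: "1 \<le> k" "k \<le> length s"
  shows "s ! (length s - k) \<le> t \<longleftrightarrow> card {q. q < length s \<and> t < s ! q} < k"
proof
  assume low: "s ! (length s - k) \<le> t"
  have "length s - k < q" if "q < length s" "t < s ! q" for q
  proof (rule ccontr)
    assume "\<not> length s - k < q"
    then have "s ! q \<le> s ! (length s - k)" using s k by (intro sorted_nth_mono) auto
    then show False using that low by simp
  qed
  then have "{q. q < length s \<and> t < s ! q} \<subseteq> {length s - k<..<length s}" by auto
  then have "card {q. q < length s \<and> t < s ! q} \<le> card {length s - k<..<length s}"
    by (intro card_mono) auto
  then show "card {q. q < length s \<and> t < s ! q} < k" using k by simp
next
  assume card_less: "card {q. q < length s \<and> t < s ! q} < k"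
  show "s ! (length s - k) \<le> t"
  proof (rule ccontr)
    assume "\<not> s ! (length s - k) \<le> t"
    moreover have "s ! (length s - k) \<le> s ! q" if "length s - k \<le> q" "q < length s" for q
      using that s by (intro sorted_nth_mono) auto
    ultimately have "{length s - k..<length s} \<subseteq> {q. q < length s \<and> t < s ! q}"
      by fastforce
    then have "k \<le> card {q. q < length s \<and> t < s ! q}"
      using k card_mono[of "{q. q < length s \<and> t < s ! q}" "{length s - k..<length s}"] by simp
    then show False using card_less by simp
  qed
qed

lemma ord_stat_le_iff_card_greater:
  assumes k: "1 \<le> k" "k \<le> n"
  shows "ord_stat n k z \<le> t \<longleftrightarrow> card {j\<in>{0..<n}. t < z j} < k"
proof -
  define s where "s = sort (map z [0..<n])"
  have s: "length s = n" "sorted s" by (simp_all add: s_def)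
  have "{i. i < length (map z [0..<n]) \<and> t < map z [0..<n] ! i} = {j\<in>{0..<n}. t < z j}"
    by auto
  then have "card {j\<in>{0..<n}. t < z j} = length (filter ((<) t) (map z [0..<n]))"
    by (simp only: length_filter_conv_card)
  also have "\<dots> = length (filter ((<) t) s)"
    by (simp add: s_def filter_sort)
  also have "\<dots> = card {q. q < length s \<and> t < s ! q}"
    by (simp add: length_filter_conv_card)
  finally show ?thesis
    using sorted_nth_le_iff_card_greater[OF s(2), of k t] s k ord_stat_conv_sort[OF k]
    by (simp add: s_def)
qed

lemma borel_measurable_ord_stat:
  assumes k: "1 \<le> k" "k \<le> n" and X: "\<And>i. i < n \<Longrightarrow> X i \<in> borel_measurable M"
  shows "(\<lambda>\<omega>. ord_stat n k (\<lambda>i. X i \<omega>)) \<in> borel_measurable M"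
proof (unfold borel_measurable_iff_le, intro allI)
  fix t
  have "{\<omega> \<in> space M. ord_stat n k (\<lambda>i. X i \<omega>) \<le> t}
      = {\<omega> \<in> space M. (\<Sum>j\<in>{0..<n}. of_bool (t < X j \<omega>)) < real k}"
    by (simp add: ord_stat_le_iff_card_greater[OF k] Int_def)
  also have "\<dots> \<in> sets M"
    using X by measurable
  finally show "{\<omega> \<in> space M. ord_stat n k (\<lambda>i. X i \<omega>) \<le> t} \<in> sets M" .
qed

lemma ord_stat_pivot_exists:
  fixes z :: "nat \<Rightarrow> real"
  assumes inj: "inj_on z {0..<n}" and m: "1 \<le> m" "m \<le> n"
  shows "\<exists>i<n. card {j\<in>{0..<n}. z i < z j} = m - 1"
proof -
  define s where "s = sort (map z [0..<n])"
  have s: "sorted_wrt (<) s" "length s = n" "set s = z ` {0..<n}"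
    using strict_sorted_sort_map_inj[OF inj] by (simp_all add: s_def)
  obtain i where i: "i < n" "z i = s ! (n - m)"
    using ord_stat_mem[OF m, of z] ord_stat_conv_sort[OF m] by (auto simp: s_def)
  have "card {j\<in>{0..<n}. z i < z j} = card {w \<in> set s. s ! (n - m) < w}"
    using card_greater_image[OF inj] s i by simp
  also have "\<dots> = m - 1" using card_greater_nth_strict_sorted[OF s(1), of "n - m"] s m by simp
  finally show ?thesis using i by blast
qed

lemma ord_stat_eq_pivot:
  fixes z :: "nat \<Rightarrow> real"
  assumes inj: "inj_on z {0..<n}" and k: "1 \<le> k" "k \<le> n" and i: "i < n"
    and above: "card {j\<in>{0..<n}. z i < z j} = k - 1"
  shows "ord_stat n k z = z i"
proof -
  define s where "s = sort (map z [0..<n])"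
  have s: "sorted_wrt (<) s" "length s = n" "set s = z ` {0..<n}"
    using strict_sorted_sort_map_inj[OF inj] by (simp_all add: s_def)
  have "z i \<in> set s" using i s by simp
  then obtain p where p: "p < n" "s ! p = z i" using s(2) by (metis in_set_conv_nth)
  have "n - 1 - p = k - 1"
    using card_greater_nth_strict_sorted[OF s(1), of p] card_greater_image[OF inj] above s p
    by simp
  then have "p = n - k" using k p by simp
  then show ?thesis using p ord_stat_conv_sort[OF k] by (simp add: s_def)
qed

text \<open>The (k-1)-th largest value is the least value above the k-th largest one.\<close>
lemma ord_stat_gap_mem_upper_set:
  fixes z :: "nat \<Rightarrow> real"
  assumes inj: "inj_on z {0..<n}" and k: "2 \<le> k" "k \<le> n" and i: "i < n"
    and above: "card {j\<in>{0..<n}. z i < z j} = k - 1" and J: "upper_set J"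
  shows "ord_stat n (k - 1) z - ord_stat n k z \<in> J \<longleftrightarrow> (\<forall>j<n. z i < z j \<longrightarrow> z j - z i \<in> J)"
proof -
  define s where "s = sort (map z [0..<n])"
  have s: "sorted_wrt (<) s" "length s = n" "set s = z ` {0..<n}"
    using strict_sorted_sort_map_inj[OF inj] by (simp_all add: s_def)
  have low: "ord_stat n k z = s ! (n - k)" and up: "ord_stat n (k - 1) z = s ! (n - k + 1)"
    using k ord_stat_conv_sort[of k n z] ord_stat_conv_sort[of "k - 1" n z]
    by (simp_all add: s_def Suc_diff_le)
  have zi: "z i = s ! (n - k)" using ord_stat_eq_pivot[OF inj _ k(2) i above] k low by simp
  have least: "s ! (n - k + 1) \<le> z j" if j: "j < n" "z i < z j" for j
  proof -
    have "z j \<in> set s" using j s by simp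
    then obtain q where q: "q < n" "s ! q = z j" using s(2) by (metis in_set_conv_nth)
    have "n - k < q"
    proof (rule ccontr)
      assume "\<not> n - k < q"
      then have "s ! q \<le> s ! (n - k)"
        using s k by (metis order.order_iff_strict linorder_not_less sorted_wrt_nth_less diff_less
            less_le_trans zero_less_numeral)
      then show False using j q zi by simp
    qed
    then have "n - k + 1 \<le> q" by simp
    then show ?thesis using q s
      by (metis order.order_iff_strict sorted_wrt_nth_less)
  qed
  have "n - k + 1 < length s" using s k by simp
  then have "s ! (n - k + 1) \<in> z ` {0..<n}" using s nth_mem by metis
  moreover have "s ! (n - k) < s ! (n - k + 1)"
    by (rule sorted_wrt_nth_less[OF s(1)]) (use s k in auto)
  ultimately show ?thesis
    using least J low up zi by (auto simp: upper_set_def)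
qed

definition pivot_configs :: "nat \<Rightarrow> nat \<Rightarrow> (nat \<times> nat set) set" where
  "pivot_configs n k = {(i, T). i < n \<and> T \<subseteq> {0..<n} - {i} \<and> card T = k - 1}"

text \<open>For distinct values and card T = k - 1, pivot_pattern n A J z i T says that z i is the
  k-th largest value, lies in A, and that T indexes the k - 1 larger values.\<close>
definition pivot_pattern :: "nat \<Rightarrow> real set \<Rightarrow> real set \<Rightarrow> (nat \<Rightarrow> real) \<Rightarrow> nat \<Rightarrow> nat set \<Rightarrow> bool"
  where "pivot_pattern n A J z i T \<longleftrightarrow>
    z i \<in> A \<and> (\<forall>j\<in>T. z i < z j \<and> z j - z i \<in> J) \<and> (\<forall>j\<in>{0..<n} - {i} - T. z j \<le> z i)"

lemma pivot_pattern_above_eq: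
  assumes "pivot_pattern n A J z i T" "T \<subseteq> {0..<n} - {i}"
  shows "T = {j\<in>{0..<n}. z i < z j}"
proof (intro set_eqI iffI)
  fix j assume "j \<in> {j\<in>{0..<n}. z i < z j}"
  then show "j \<in> T" using assms(1) unfolding pivot_pattern_def by force
qed (use assms in \<open>auto simp: pivot_pattern_def\<close>)

lemma finite_pivot_configs: "finite (pivot_configs n k)"
  by (rule finite_subset[of _ "{0..<n} \<times> Pow {0..<n}"]) (auto simp: pivot_configs_def)

lemma card_pivot_patterns:
  fixes z :: "nat \<Rightarrow> real"
  assumes inj: "inj_on z {0..<n}" and k: "2 \<le> k" "k \<le> n" and J: "upper_set J"
  shows "card {c \<in> pivot_configs n k. case_prod (pivot_pattern n A J z) c}
       = (if ord_stat n k z \<in> A \<and> ord_stat n (k - 1) z - ord_stat n k z \<in> J then 1 else 0)"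
proof -
  obtain i0 where i0: "i0 < n" "card {j\<in>{0..<n}. z i0 < z j} = k - 1"
    using ord_stat_pivot_exists[OF inj, of k] k by auto
  define T0 where "T0 = {j\<in>{0..<n}. z i0 < z j}"
  let ?C = "ord_stat n k z \<in> A \<and> ord_stat n (k - 1) z - ord_stat n k z \<in> J"
  have Y: "ord_stat n k z = z i0" using ord_stat_eq_pivot[OF inj _ k(2) i0] k by simp
  have S: "ord_stat n (k - 1) z - ord_stat n k z \<in> J \<longleftrightarrow> (\<forall>j\<in>T0. z j - z i0 \<in> J)"
    using ord_stat_gap_mem_upper_set[OF inj k i0 J] by (auto simp: T0_def)
  have "{c \<in> pivot_configs n k. case_prod (pivot_pattern n A J z) c} = (if ?C then {(i0, T0)} else {})"
  proof (intro set_eqI iffI)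
    fix c assume c: "c \<in> {c \<in> pivot_configs n k. case_prod (pivot_pattern n A J z) c}"
    then obtain i T where c_eq: "c = (i, T)" and i: "i < n" and T: "T \<subseteq> {0..<n} - {i}"
      "card T = k - 1" and pat: "pivot_pattern n A J z i T"
      by (auto simp: pivot_configs_def)
    have T_eq: "T = {j\<in>{0..<n}. z i < z j}"
      using pivot_pattern_above_eq[OF pat T(1)] .
    have "z i = z i0"
      using ord_stat_eq_pivot[OF inj _ k(2) i] T T_eq Y k by simp
    then have "i = i0" using inj i i0 by (auto dest: inj_onD)
    moreover have "T = T0" using T_eq \<open>i = i0\<close> by (simp add: T0_def)
    moreover have ?C using pat S Y \<open>i = i0\<close> \<open>T = T0\<close> by (simp add: pivot_pattern_def)
    ultimately show "c \<in> (if ?C then {(i0, T0)} else {})" using c_eq by simp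
  next
    fix c assume "c \<in> (if ?C then {(i0, T0)} else {})"
    then have C: ?C and c_eq: "c = (i0, T0)" by (auto split: if_splits)
    have "pivot_pattern n A J z i0 T0"
      using C S Y unfolding pivot_pattern_def T0_def by auto
    moreover have "(i0, T0) \<in> pivot_configs n k"
      using i0 by (auto simp: pivot_configs_def T0_def)
    ultimately show "c \<in> {c \<in> pivot_configs n k. case_prod (pivot_pattern n A J z) c}"
      using c_eq by simp
  qed
  then show ?thesis by simp
qed

section \<open>Negative dependence of upper sets and covariances\<close>

lemma nn_integral_mult_eq_layer_cake:
  fixes w :: "'a \<Rightarrow> ennreal" and G :: "'a \<Rightarrow> real"
  assumes M: "sigma_finite_measure M" and w[measurable]: "w \<in> borel_measurable M"
    and G[measurable]: "G \<in> borel_measurable M" and G_nonneg: "\<And>\<omega>. 0 \<le> G \<omega>"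
  shows "(\<integral>\<^sup>+ \<omega>. w \<omega> * ennreal (G \<omega>) \<partial>M)
       = (\<integral>\<^sup>+ u. indicator {0..} u * (\<integral>\<^sup>+ \<omega>. w \<omega> * indicator {\<omega>\<in>space M. u < G \<omega>} \<omega> \<partial>M) \<partial>lborel)"
proof -
  interpret pair_sigma_finite M lborel
    by (intro pair_sigma_finite.intro M) (rule lborel.sigma_finite_measure_axioms)
  define F where "F \<omega> u = (if 0 \<le> u \<and> u < G \<omega> then w \<omega> else 0)" for \<omega> u
  have "(\<integral>\<^sup>+ \<omega>. w \<omega> * ennreal (G \<omega>) \<partial>M) = (\<integral>\<^sup>+ \<omega>. (\<integral>\<^sup>+ u. F \<omega> u \<partial>lborel) \<partial>M)"
  proof (intro nn_integral_cong)
    fix \<omega>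
    have "(\<integral>\<^sup>+ u. F \<omega> u \<partial>lborel) = (\<integral>\<^sup>+ u. w \<omega> * indicator {0..<G \<omega>} u \<partial>lborel)"
      by (intro nn_integral_cong) (auto simp: F_def indicator_def)
    then show "w \<omega> * ennreal (G \<omega>) = (\<integral>\<^sup>+ u. F \<omega> u \<partial>lborel)"
      using G_nonneg[of \<omega>] by (simp add: nn_integral_cmult_indicator)
  qed
  also have "\<dots> = (\<integral>\<^sup>+ u. (\<integral>\<^sup>+ \<omega>. F \<omega> u \<partial>M) \<partial>lborel)"
  proof -
    have "case_prod F \<in> borel_measurable (M \<Otimes>\<^sub>M lborel)"
      unfolding F_def by measurable
    then show ?thesis by (rule Fubini'[symmetric])
  qed
  also have "\<dots> = (\<integral>\<^sup>+ u. indicator {0..} u * (\<integral>\<^sup>+ \<omega>. w \<omega> * indicator {\<omega>\<in>space M. u < G \<omega>} \<omega> \<partial>M) \<partial>lborel)"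
  proof (intro nn_integral_cong)
    fix u :: real
    have "(\<integral>\<^sup>+ \<omega>. F \<omega> u \<partial>M)
        = (\<integral>\<^sup>+ \<omega>. indicator {0..} u * (w \<omega> * indicator {\<omega>\<in>space M. u < G \<omega>} \<omega>) \<partial>M)"
      by (intro nn_integral_cong) (auto simp: F_def indicator_def)
    then show "(\<integral>\<^sup>+ \<omega>. F \<omega> u \<partial>M)
        = indicator {0..} u * (\<integral>\<^sup>+ \<omega>. w \<omega> * indicator {\<omega>\<in>space M. u < G \<omega>} \<omega> \<partial>M)"
      by (simp add: nn_integral_cmult)
  qed
  finally show ?thesis .
qed

text \<open>Apply the layer-cake formula to each factor in turn.\<close>
lemma nn_integral_mult_le_of_neg_quadrant_dependent:
  fixes G1 G2 :: "'a \<Rightarrow> real"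
  assumes M: "sigma_finite_measure M"
    and G1[measurable]: "G1 \<in> borel_measurable M" and G2[measurable]: "G2 \<in> borel_measurable M"
    and G1_nonneg: "\<And>\<omega>. 0 \<le> G1 \<omega>" and G2_nonneg: "\<And>\<omega>. 0 \<le> G2 \<omega>"
    and neg: "\<And>t u. emeasure M {\<omega>\<in>space M. t < G1 \<omega> \<and> u < G2 \<omega>}
      \<le> emeasure M {\<omega>\<in>space M. t < G1 \<omega>} * emeasure M {\<omega>\<in>space M. u < G2 \<omega>}"
  shows "(\<integral>\<^sup>+ \<omega>. ennreal (G1 \<omega> * G2 \<omega>) \<partial>M) \<le> (\<integral>\<^sup>+ \<omega>. G1 \<omega> \<partial>M) * (\<integral>\<^sup>+ \<omega>. G2 \<omega> \<partial>M)"
proof -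
  define A where "A t = {\<omega>\<in>space M. t < G1 \<omega>}" for t
  define B where "B u = {\<omega>\<in>space M. u < G2 \<omega>}" for u
  have A[measurable]: "A t \<in> sets M" for t unfolding A_def by measurable
  have B[measurable]: "B u \<in> sets M" for u unfolding B_def by measurable
  have inner: "(\<integral>\<^sup>+ \<omega>. ennreal (G2 \<omega>) * indicator (A t) \<omega> \<partial>M)
      \<le> (\<integral>\<^sup>+ \<omega>. G2 \<omega> \<partial>M) * emeasure M (A t)" for t
  proof -
    have "(\<integral>\<^sup>+ \<omega>. ennreal (G2 \<omega>) * indicator (A t) \<omega> \<partial>M)
        = (\<integral>\<^sup>+ \<omega>. indicator (A t) \<omega> * ennreal (G2 \<omega>) \<partial>M)"
      by (simp add: mult.commute)
    also have "\<dots> = (\<integral>\<^sup>+ u. indicator {0..} u * (\<integral>\<^sup>+ \<omega>. indicator (A t) \<omega> * indicator (B u) \<omega> \<partial>M) \<partial>lborel)"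
      unfolding B_def by (rule nn_integral_mult_eq_layer_cake[OF M _ G2 G2_nonneg]) measurable
    also have "\<dots> = (\<integral>\<^sup>+ u. indicator {0..} u * emeasure M (A t \<inter> B u) \<partial>lborel)"
      by (simp add: indicator_inter_arith[symmetric])
    also have "\<dots> \<le> (\<integral>\<^sup>+ u. indicator {0..} u * (emeasure M (A t) * emeasure M (B u)) \<partial>lborel)"
    proof (intro nn_integral_mono mult_left_mono order.refl)
      fix u
      have "A t \<inter> B u = {\<omega>\<in>space M. t < G1 \<omega> \<and> u < G2 \<omega>}" by (auto simp: A_def B_def)
      then show "emeasure M (A t \<inter> B u) \<le> emeasure M (A t) * emeasure M (B u)"
        using neg unfolding A_def B_def by simp
    qed simp
    also have "\<dots> = (\<integral>\<^sup>+ u. indicator {0..} u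
        * (\<integral>\<^sup>+ \<omega>. emeasure M (A t) * indicator {\<omega>\<in>space M. u < G2 \<omega>} \<omega> \<partial>M) \<partial>lborel)"
      using B by (simp add: nn_integral_cmult_indicator B_def)
    also have "\<dots> = (\<integral>\<^sup>+ \<omega>. emeasure M (A t) * ennreal (G2 \<omega>) \<partial>M)"
      by (rule nn_integral_mult_eq_layer_cake[OF M _ G2 G2_nonneg, symmetric]) simp
    also have "\<dots> = (\<integral>\<^sup>+ \<omega>. G2 \<omega> \<partial>M) * emeasure M (A t)"
      by (subst nn_integral_cmult) (simp_all add: mult.commute)
    finally show ?thesis .
  qed
  have "(\<integral>\<^sup>+ \<omega>. ennreal (G1 \<omega> * G2 \<omega>) \<partial>M) = (\<integral>\<^sup>+ \<omega>. ennreal (G2 \<omega>) * ennreal (G1 \<omega>) \<partial>M)"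
    using G1_nonneg G2_nonneg by (simp add: ennreal_mult mult.commute)
  also have "\<dots> = (\<integral>\<^sup>+ t. indicator {0..} t * (\<integral>\<^sup>+ \<omega>. ennreal (G2 \<omega>) * indicator (A t) \<omega> \<partial>M) \<partial>lborel)"
    unfolding A_def by (rule nn_integral_mult_eq_layer_cake[OF M _ G1 G1_nonneg]) measurable
  also have "\<dots> \<le> (\<integral>\<^sup>+ t. indicator {0..} t * ((\<integral>\<^sup>+ \<omega>. G2 \<omega> \<partial>M) * emeasure M (A t)) \<partial>lborel)"
    using inner by (intro nn_integral_mono mult_left_mono) auto
  also have "\<dots> = (\<integral>\<^sup>+ t. indicator {0..} t
      * (\<integral>\<^sup>+ \<omega>. (\<integral>\<^sup>+ \<omega>. G2 \<omega> \<partial>M) * indicator {\<omega>\<in>space M. t < G1 \<omega>} \<omega> \<partial>M) \<partial>lborel)"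
    using A by (simp add: nn_integral_cmult_indicator A_def)
  also have "\<dots> = (\<integral>\<^sup>+ \<omega>. (\<integral>\<^sup>+ \<omega>. G2 \<omega> \<partial>M) * ennreal (G1 \<omega>) \<partial>M)"
    by (rule nn_integral_mult_eq_layer_cake[OF M _ G1 G1_nonneg, symmetric]) simp
  also have "\<dots> = (\<integral>\<^sup>+ \<omega>. G1 \<omega> \<partial>M) * (\<integral>\<^sup>+ \<omega>. G2 \<omega> \<partial>M)"
    by (subst nn_integral_cmult) (simp_all add: mult.commute)
  finally show ?thesis .
qed

lemma (in prob_space) covariance_const_diff:
  fixes U1 U2 :: "'a \<Rightarrow> real"
  assumes "integrable M U1" "integrable M U2" "integrable M (\<lambda>\<omega>. U1 \<omega> * U2 \<omega>)"
  shows "(LINT \<omega>|M. (c1 - U1 \<omega>) * (c2 - U2 \<omega>)) - (LINT \<omega>|M. c1 - U1 \<omega>) * (LINT \<omega>|M. c2 - U2 \<omega>)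
       = (LINT \<omega>|M. U1 \<omega> * U2 \<omega>) - (LINT \<omega>|M. U1 \<omega>) * (LINT \<omega>|M. U2 \<omega>)"
proof -
  have "(\<lambda>\<omega>. (c1 - U1 \<omega>) * (c2 - U2 \<omega>)) = (\<lambda>\<omega>. (c1 * c2 + U1 \<omega> * U2 \<omega>) - (c2 * U1 \<omega> + c1 * U2 \<omega>))"
    by (rule ext) (simp add: algebra_simps)
  then have "(LINT \<omega>|M. (c1 - U1 \<omega>) * (c2 - U2 \<omega>))
      = (LINT \<omega>|M. (c1 * c2 + U1 \<omega> * U2 \<omega>) - (c2 * U1 \<omega> + c1 * U2 \<omega>))"
    by simp
  also have "\<dots> = c1 * c2 + (LINT \<omega>|M. U1 \<omega> * U2 \<omega>) - c2 * (LINT \<omega>|M. U1 \<omega>) - c1 * (LINT \<omega>|M. U2 \<omega>)"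
    using assms by (simp add: prob_space)
  finally show ?thesis using assms by (simp add: prob_space algebra_simps)
qed

definition neg_dependent_upper_sets :: "'a measure \<Rightarrow> ('a \<Rightarrow> real) \<Rightarrow> ('a \<Rightarrow> real) \<Rightarrow> bool" where
  "neg_dependent_upper_sets M Y S \<longleftrightarrow>
    (\<forall>I J. upper_set I \<longrightarrow> upper_set J \<longrightarrow> I \<in> sets borel \<longrightarrow> J \<in> sets borel \<longrightarrow>
      emeasure M {\<omega>\<in>space M. Y \<omega> \<in> I \<and> S \<omega> \<in> J}
        \<le> emeasure M {\<omega>\<in>space M. Y \<omega> \<in> I} * emeasure M {\<omega>\<in>space M. S \<omega> \<in> J})"

lemma (in prob_space) nn_integral_mono_mult_le:
  fixes Y S :: "'a \<Rightarrow> real" and g1 g2 :: "real \<Rightarrow> real"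
  assumes neg: "neg_dependent_upper_sets M Y S"
    and [measurable]: "Y \<in> borel_measurable M" "S \<in> borel_measurable M"
    and g1: "mono g1" "\<And>x. 0 \<le> g1 x" and g2: "mono g2" "\<And>x. 0 \<le> g2 x"
  shows "(\<integral>\<^sup>+ \<omega>. ennreal (g1 (Y \<omega>) * g2 (S \<omega>)) \<partial>M)
       \<le> (\<integral>\<^sup>+ \<omega>. g1 (Y \<omega>) \<partial>M) * (\<integral>\<^sup>+ \<omega>. g2 (S \<omega>) \<partial>M)"
proof -
  have [measurable]: "g1 \<in> borel_measurable borel" "g2 \<in> borel_measurable borel"
    using g1 g2 by (simp_all add: borel_measurable_mono)
  have upper: "upper_set {x. t < g x} \<and> {x. t < g x} \<in> sets borel" if "mono g" for g :: "real \<Rightarrow> real" and t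
    using that borel_measurable_mono[OF that]
    by (auto simp: upper_set_def dest: monoD intro: less_le_trans)
  show ?thesis
  proof (rule nn_integral_mult_le_of_neg_quadrant_dependent)
    show "emeasure M {\<omega>\<in>space M. t < g1 (Y \<omega>) \<and> u < g2 (S \<omega>)}
        \<le> emeasure M {\<omega>\<in>space M. t < g1 (Y \<omega>)} * emeasure M {\<omega>\<in>space M. u < g2 (S \<omega>)}" for t u
      using neg[unfolded neg_dependent_upper_sets_def, rule_format, of "{x. t < g1 x}" "{x. u < g2 x}"]
        upper[OF g1(1), of t] upper[OF g2(1), of u] by simp
    show "sigma_finite_measure M" by (rule prob_space_imp_sigma_finite[OF prob_space_axioms])
    show "(\<lambda>\<omega>. g1 (Y \<omega>)) \<in> borel_measurable M" "(\<lambda>\<omega>. g2 (S \<omega>)) \<in> borel_measurable M"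
      by measurable
  qed (simp_all add: g1 g2)
qed

lemma integral_mult_le_of_nn_integral_mult_le:
  fixes G1 G2 :: "'a \<Rightarrow> real"
  assumes "integrable M G1" "integrable M G2" "integrable M (\<lambda>\<omega>. G1 \<omega> * G2 \<omega>)"
    and "\<And>\<omega>. 0 \<le> G1 \<omega>" "\<And>\<omega>. 0 \<le> G2 \<omega>"
    and "(\<integral>\<^sup>+ \<omega>. ennreal (G1 \<omega> * G2 \<omega>) \<partial>M) \<le> (\<integral>\<^sup>+ \<omega>. G1 \<omega> \<partial>M) * (\<integral>\<^sup>+ \<omega>. G2 \<omega> \<partial>M)"
  shows "(LINT \<omega>|M. G1 \<omega> * G2 \<omega>) \<le> (LINT \<omega>|M. G1 \<omega>) * (LINT \<omega>|M. G2 \<omega>)"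
proof -
  have G_nonneg: "0 \<le> (LINT \<omega>|M. G1 \<omega>)" "0 \<le> (LINT \<omega>|M. G2 \<omega>)"
    using assms(4,5) by (simp_all add: Bochner_Integration.integral_nonneg)
  have "(\<integral>\<^sup>+ \<omega>. ennreal (G1 \<omega> * G2 \<omega>) \<partial>M) = ennreal (LINT \<omega>|M. G1 \<omega> * G2 \<omega>)"
    using assms(3-5) by (intro nn_integral_eq_integral) auto
  moreover have "(\<integral>\<^sup>+ \<omega>. G1 \<omega> \<partial>M) = ennreal (LINT \<omega>|M. G1 \<omega>)"
    using assms(1,4) by (intro nn_integral_eq_integral) auto
  moreover have "(\<integral>\<^sup>+ \<omega>. G2 \<omega> \<partial>M) = ennreal (LINT \<omega>|M. G2 \<omega>)"
    using assms(2,5) by (intro nn_integral_eq_integral) auto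
  ultimately have "ennreal (LINT \<omega>|M. G1 \<omega> * G2 \<omega>) \<le> ennreal ((LINT \<omega>|M. G1 \<omega>) * (LINT \<omega>|M. G2 \<omega>))"
    using assms(6) G_nonneg by (simp only: ennreal_mult)
  then show ?thesis using G_nonneg by simp
qed

text \<open>Subtracting the non-increasing functions from the constants f1 0 and f2 0 does not change
  the covariance and, as Y and S are nonnegative, gives non-decreasing functions, which may be
  truncated at 0.\<close>
lemma (in prob_space) integral_antimono_mult_le:
  fixes Y S :: "'a \<Rightarrow> real" and f1 f2 :: "real \<Rightarrow> real"
  assumes neg: "neg_dependent_upper_sets M Y S"
    and Y[measurable]: "Y \<in> borel_measurable M" and S[measurable]: "S \<in> borel_measurable M"
    and Y_nonneg: "AE \<omega> in M. 0 \<le> Y \<omega>" and S_nonneg: "AE \<omega> in M. 0 \<le> S \<omega>"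
    and f1: "antimono f1" and f2: "antimono f2"
    and int1: "integrable M (\<lambda>\<omega>. f1 (Y \<omega>))" and int2: "integrable M (\<lambda>\<omega>. f2 (S \<omega>))"
    and int12: "integrable M (\<lambda>\<omega>. f1 (Y \<omega>) * f2 (S \<omega>))"
  shows "(LINT \<omega>|M. f1 (Y \<omega>) * f2 (S \<omega>)) \<le> (LINT \<omega>|M. f1 (Y \<omega>)) * (LINT \<omega>|M. f2 (S \<omega>))"
proof -
  define g1 where "g1 x = max 0 (f1 0 - f1 x)" for x
  define g2 where "g2 x = max 0 (f2 0 - f2 x)" for x
  have g: "mono g1" "mono g2" "0 \<le> g1 x" "0 \<le> g2 x" for x
    using f1 f2 unfolding g1_def g2_def mono_def antimono_def by (smt (verit, best))+
  have [measurable]: "g1 \<in> borel_measurable borel" "g2 \<in> borel_measurable borel"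
    using g by (simp_all add: borel_measurable_mono)
  have [measurable]: "(\<lambda>\<omega>. f1 (Y \<omega>)) \<in> borel_measurable M" "(\<lambda>\<omega>. f2 (S \<omega>)) \<in> borel_measurable M"
    using int1 int2 by auto
  have G1: "AE \<omega> in M. g1 (Y \<omega>) = f1 0 - f1 (Y \<omega>)"
    using Y_nonneg by eventually_elim (use f1 in \<open>auto simp: g1_def antimono_def\<close>)
  have G2: "AE \<omega> in M. g2 (S \<omega>) = f2 0 - f2 (S \<omega>)"
    using S_nonneg by eventually_elim (use f2 in \<open>auto simp: g2_def antimono_def\<close>)
  have G12: "AE \<omega> in M. g1 (Y \<omega>) * g2 (S \<omega>) = (f1 0 - f1 (Y \<omega>)) * (f2 0 - f2 (S \<omega>))"
    using G1 G2 by eventually_elim simp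
  have "(LINT \<omega>|M. g1 (Y \<omega>) * g2 (S \<omega>)) \<le> (LINT \<omega>|M. g1 (Y \<omega>)) * (LINT \<omega>|M. g2 (S \<omega>))"
    using integrable_cong_AE[OF _ _ G1] integrable_cong_AE[OF _ _ G2] integrable_cong_AE[OF _ _ G12]
      int1 int2 int12 g nn_integral_mono_mult_le[OF neg Y S g(1,3) g(2,4)]
    by (intro integral_mult_le_of_nn_integral_mult_le) (simp_all add: algebra_simps)
  moreover have "(LINT \<omega>|M. g1 (Y \<omega>) * g2 (S \<omega>)) - (LINT \<omega>|M. g1 (Y \<omega>)) * (LINT \<omega>|M. g2 (S \<omega>))
      = (LINT \<omega>|M. f1 (Y \<omega>) * f2 (S \<omega>)) - (LINT \<omega>|M. f1 (Y \<omega>)) * (LINT \<omega>|M. f2 (S \<omega>))"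
  proof -
    have "(LINT \<omega>|M. g1 (Y \<omega>)) = (LINT \<omega>|M. f1 0 - f1 (Y \<omega>))"
      by (rule integral_cong_AE[OF _ _ G1]) measurable
    moreover have "(LINT \<omega>|M. g2 (S \<omega>)) = (LINT \<omega>|M. f2 0 - f2 (S \<omega>))"
      by (rule integral_cong_AE[OF _ _ G2]) measurable
    moreover have "(LINT \<omega>|M. g1 (Y \<omega>) * g2 (S \<omega>)) = (LINT \<omega>|M. (f1 0 - f1 (Y \<omega>)) * (f2 0 - f2 (S \<omega>)))"
      by (rule integral_cong_AE[OF _ _ G12]) measurable
    ultimately show ?thesis using covariance_const_diff[OF int1 int2 int12] by simp
  qed
  ultimately show ?thesis by simp
qed

section \<open>Densities with increasing hazard rate\<close>

lemma prod_if_one_zero: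
  "finite K \<Longrightarrow> (\<Prod>j\<in>K. if P j then 1 else 0 :: 'a::comm_semiring_1) = (if \<forall>j\<in>K. P j then 1 else 0)"
  by (induction K rule: finite_induct) auto

locale ihr_density =
  fixes f :: "real \<Rightarrow> real"
  assumes IHR: "IHR_density f"
begin

lemma density_measurable[measurable]: "f \<in> borel_measurable borel"
  using IHR by (simp add: IHR_density_def)

lemma hazard_mono_on: "mono_on {0..} (hazard f)"
  using IHR by (simp add: IHR_density_def)

lemma density_nonneg: "0 \<le> f x"
  using IHR by (simp add: IHR_density_def)

lemma density_eq_0_neg: "x < 0 \<Longrightarrow> f x = 0"
  using IHR by (simp add: IHR_density_def)

definition law :: "real measure" where
  "law = density lborel (\<lambda>x. ennreal (f x))"

lemma sets_law[simp, measurable_cong]: "sets law = sets borel"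
  by (simp add: law_def)

lemma space_law[simp]: "space law = UNIV"
  by (simp add: law_def)

lemma emeasure_law: "A \<in> sets borel \<Longrightarrow> emeasure law A = (\<integral>\<^sup>+ t. ennreal (f t) * indicator A t \<partial>lborel)"
  unfolding law_def by (subst emeasure_density) auto

lemma set_integral_density_nonneg: "0 \<le> (LINT t:A|lborel. f t)"
  unfolding set_lebesgue_integral_def using density_nonneg
  by (intro Bochner_Integration.integral_nonneg) (auto simp: indicator_def)

lemma emeasure_law_eq_set_integral:
  assumes A: "A \<in> sets borel"
  shows "emeasure law A = ennreal (LINT t:A|lborel. f t)"
proof -
  have "emeasure law A = (\<integral>\<^sup>+ t. ennreal (indicator A t *\<^sub>R f t) \<partial>lborel)"
    using A by (simp add: emeasure_law) (intro nn_integral_cong, simp add: indicator_def)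
  also have "\<dots> = ennreal (LINT t:A|lborel. f t)"
    unfolding set_lebesgue_integral_def
    using A IHR density_nonneg integrable_real_mult_indicator[of A lborel f]
    by (intro nn_integral_eq_integral) (auto simp: IHR_density_def mult.commute)
  finally show ?thesis .
qed

lemma prob_space_law: "prob_space law"
proof
  show "emeasure law (space law) = 1"
    using emeasure_law_eq_set_integral[of UNIV] IHR
    by (simp add: IHR_density_def set_lebesgue_integral_def)
qed

sublocale law: prob_space law
  by (rule prob_space_law)

lemma cdf_eq_measure: "cdf_of_density f x = measure law {..x}"
  using emeasure_law_eq_set_integral[of "{..x}"] law.emeasure_eq_measure[of "{..x}"]
    set_integral_density_nonneg[of "{..x}"]
  by (simp add: cdf_of_density_def)

lemma measure_law_singleton: "measure law {x} = 0"
  using emeasure_law[of "{x}"] law.emeasure_eq_measure[of "{x}"] by simp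

lemma isCont_cdf_of_density: "isCont (cdf_of_density f) x"
proof -
  have "real_distribution law"
    by (simp add: real_distribution_def real_distribution_axioms_def prob_space_law)
  then show ?thesis
    using finite_borel_measure.isCont_cdf[OF real_distribution.finite_borel_measure_M]
      measure_law_singleton by (simp add: cdf_eq_measure[abs_def] cdf_def[abs_def])
qed

definition surv :: "real \<Rightarrow> real" where
  "surv x = 1 - cdf_of_density f x"

lemma surv_pos: "0 < surv x"
  using IHR by (simp add: surv_def IHR_density_def)

lemma surv_eq_measure: "surv x = measure law {x<..}"
proof -
  have "measure law {x<..} = 1 - measure law {..x}"
    by (subst law.prob_compl[symmetric]) (auto intro!: arg_cong[where f="measure law"])
  then show ?thesis by (simp add: surv_def cdf_eq_measure)
qed

lemma surv_eq_measure_atLeast: "surv x = measure law {x..}"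
proof -
  have "measure law {x..} = measure law {x<..} + measure law {x}"
    by (subst law.finite_measure_Union[symmetric]) (auto intro!: arg_cong[where f="measure law"])
  then show ?thesis using measure_law_singleton surv_eq_measure by simp
qed

lemma surv_diff: "a \<le> b \<Longrightarrow> surv a - surv b = measure law {a<..b}"
proof -
  assume "a \<le> b"
  then have "measure law {a<..} = measure law {a<..b} + measure law {b<..}"
    by (subst law.finite_measure_Union[symmetric]) (auto intro!: arg_cong[where f="measure law"])
  then show ?thesis by (simp add: surv_eq_measure)
qed

lemma continuous_surv: "continuous_on A surv"
  unfolding surv_def
  by (intro continuous_intros continuous_at_imp_continuous_on ballI isCont_cdf_of_density)

lemma surv_shift_measurable[measurable]: "(\<lambda>y. surv (y + b)) \<in> borel_measurable borel"
  by (intro borel_measurable_continuous_onI continuous_on_compose2[OF continuous_surv]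
      continuous_intros) auto

lemma cdf_measurable[measurable]: "cdf_of_density f \<in> borel_measurable borel"
  using isCont_cdf_of_density by (intro borel_measurable_continuous_onI continuous_at_imp_continuous_on) auto

lemma cdf_nonneg: "0 \<le> cdf_of_density f x"
  by (simp add: cdf_eq_measure)

lemma density_eq_hazard_surv: "f t = hazard f t * surv t"
  using surv_pos[of t] by (simp add: hazard_def surv_def)

lemma hazard_nonneg: "0 \<le> hazard f t"
  using surv_pos[of t] density_nonneg[of t] by (simp add: hazard_def surv_def)

lemma emeasure_law_shift:
  "emeasure law {x + a<..x + b} = (\<integral>\<^sup>+ u. ennreal (f (x + u)) * indicator {a<..b} u \<partial>lborel)"
proof -
  have "emeasure law {x + a<..x + b}
      = (\<integral>\<^sup>+ u. ennreal (f (x + 1 * u)) * indicator {x + a<..x + b} (x + 1 * u) \<partial>lborel)"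
    using nn_integral_real_affine[of "\<lambda>t. ennreal (f t) * indicator {x + a<..x + b} t" 1 x]
    by (simp add: emeasure_law)
  also have "\<dots> = (\<integral>\<^sup>+ u. ennreal (f (x + u)) * indicator {a<..b} u \<partial>lborel)"
    by (intro nn_integral_cong) (auto simp: indicator_def)
  finally show ?thesis .
qed

text \<open>Integrate f = hazard f * surv over (t1, d], using that the hazard rate is larger at
  y + u than at x + u.\<close>
lemma surv_cross_diff_le:
  assumes x: "0 \<le> x" "x \<le> y" and t1: "0 \<le> t1" "t1 \<le> d"
    and cross: "\<And>u. t1 < u \<Longrightarrow> u \<le> d \<Longrightarrow> surv (x + u) * surv y < surv (y + u) * surv x"
  shows "surv y * (surv (x + t1) - surv (x + d)) \<le> surv x * (surv (y + t1) - surv (y + d))"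
proof -
  have "ennreal (surv y) * emeasure law {x + t1<..x + d}
      = (\<integral>\<^sup>+ u. ennreal (surv y) * (ennreal (f (x + u)) * indicator {t1<..d} u) \<partial>lborel)"
    unfolding emeasure_law_shift by (rule nn_integral_cmult[symmetric]) auto
  also have "\<dots> \<le> (\<integral>\<^sup>+ u. ennreal (surv x) * (ennreal (f (y + u)) * indicator {t1<..d} u) \<partial>lborel)"
  proof (intro nn_integral_mono)
    fix u
    show "ennreal (surv y) * (ennreal (f (x + u)) * indicator {t1<..d} u)
        \<le> ennreal (surv x) * (ennreal (f (y + u)) * indicator {t1<..d} u)"
    proof (cases "u \<in> {t1<..d}")
      case True
      then have u: "t1 < u" "u \<le> d" by auto
      have "surv y * f (x + u) = hazard f (x + u) * (surv (x + u) * surv y)"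
        by (subst density_eq_hazard_surv) (simp add: algebra_simps)
      also have "\<dots> \<le> hazard f (x + u) * (surv (y + u) * surv x)"
        using cross[OF u] hazard_nonneg by (intro mult_left_mono) auto
      also have "\<dots> \<le> hazard f (y + u) * (surv (y + u) * surv x)"
        using x u t1 surv_pos[of "y + u"] surv_pos[of x]
        by (intro mult_right_mono mono_onD[OF hazard_mono_on]) auto
      also have "\<dots> = surv x * f (y + u)"
        using density_eq_hazard_surv[of "y + u"] by (simp add: algebra_simps)
      finally show ?thesis using True surv_pos[of x] surv_pos[of y] density_nonneg
        by (simp add: ennreal_mult[symmetric])
    qed simp
  qed
  also have "\<dots> = ennreal (surv x) * emeasure law {y + t1<..y + d}"
    unfolding emeasure_law_shift by (rule nn_integral_cmult) auto
  finally show ?thesis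
    using surv_pos[of x] surv_pos[of y] t1
    by (simp add: law.emeasure_eq_measure surv_diff ennreal_mult[symmetric])
qed

text \<open>The conditional survival surv (x + d) / surv x is non-increasing in x \<ge> 0: the difference
  V u of the two sides below vanishes at u = 0, and past its last zero t1 before d it would be
  positive, which surv_cross_diff_le turns into V d \<le> V t1 \<le> 0.\<close>
lemma surv_shift_le:
  assumes x: "0 \<le> x" "x \<le> y" and d: "0 \<le> d"
  shows "surv (y + d) * surv x \<le> surv (x + d) * surv y"
proof (rule ccontr)
  define V where "V u = surv (y + u) * surv x - surv (x + u) * surv y" for u
  assume "\<not> ?thesis"
  then have Vd: "V d > 0" by (simp add: V_def)
  have "continuous_on {0..d} V" unfolding V_def
    by (intro continuous_intros continuous_on_compose2[OF continuous_surv]) auto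
  then have closed: "closed ({0..d} \<inter> V -` {..0})"
    by (rule continuous_closed_preimage) auto
  define t1 where "t1 = Sup ({0..d} \<inter> V -` {..0})"
  have bdd: "bdd_above ({0..d} \<inter> V -` {..0})" by (auto simp: bdd_above_def)
  have "0 \<in> {0..d} \<inter> V -` {..0}" using d by (simp add: V_def)
  then have "t1 \<in> {0..d} \<inter> V -` {..0}"
    unfolding t1_def using closed bdd by (intro closed_contains_Sup) auto
  then have t1: "0 \<le> t1" "t1 \<le> d" "V t1 \<le> 0" by auto
  have "V u > 0" if "t1 < u" "u \<le> d" for u
    using cSup_upper[OF _ bdd, of u] that t1 by (force simp: t1_def)
  then have "surv y * (surv (x + t1) - surv (x + d)) \<le> surv x * (surv (y + t1) - surv (y + d))"
    using x t1 by (intro surv_cross_diff_le) (auto simp: V_def)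
  then have "V d \<le> V t1" unfolding V_def by (simp add: algebra_simps)
  then show False using Vd t1 by simp
qed

definition gap_tail :: "real set \<Rightarrow> real \<Rightarrow> real" where
  "gap_tail J x = measure law {t. x < t \<and> t - x \<in> J}"

lemma gap_tail_UNIV: "gap_tail UNIV x = surv x"
  by (simp add: gap_tail_def surv_eq_measure greaterThan_def)

lemma gap_tail_upper_set_cases:
  assumes J: "J \<in> sets borel" "upper_set J"
  shows "(\<forall>x. gap_tail J x = 0) \<or> (\<exists>\<beta>\<ge>0. \<forall>x. gap_tail J x = surv (x + \<beta>))"
proof (cases "J \<inter> {0<..} = {}")
  case True
  then have "\<And>x. {t. x < t \<and> t - x \<in> J} = {}" by auto
  then show ?thesis by (simp only: gap_tail_def) simp
next
  case False
  define \<beta> where "\<beta> = Inf (J \<inter> {0<..})"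
  have bdd: "bdd_below (J \<inter> {0<..})" by (auto intro: bdd_belowI[of _ 0])
  have "gap_tail J x = surv (x + \<beta>)" for x
  proof -
    have "{x + \<beta><..} \<subseteq> {t. x < t \<and> t - x \<in> J}" (is "_ \<subseteq> ?E")
    proof
      fix t assume "t \<in> {x + \<beta><..}"
      then have "Inf (J \<inter> {0<..}) < t - x" by (simp add: \<beta>_def)
      then obtain c where "c \<in> J \<inter> {0<..}" "c < t - x"
        using cInf_less_iff[OF False bdd] by auto
      then show "t \<in> {t. x < t \<and> t - x \<in> J}" using J(2) by (auto simp: upper_set_def)
    qed
    then have "surv (x + \<beta>) \<le> gap_tail J x"
      unfolding gap_tail_def surv_eq_measure using J(1) by (intro law.finite_measure_mono) auto
    moreover have "?E \<subseteq> {x + \<beta>..}"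
      using cInf_lower[OF _ bdd] by (fastforce simp: \<beta>_def)
    then have "gap_tail J x \<le> surv (x + \<beta>)"
      unfolding gap_tail_def surv_eq_measure_atLeast by (intro law.finite_measure_mono) auto
    ultimately show ?thesis by simp
  qed
  moreover have "0 \<le> \<beta>" unfolding \<beta>_def using False by (intro cInf_greatest) auto
  ultimately show ?thesis by blast
qed

text \<open>Up to the number of configurations, the probability that the k-th largest of n
  observations lies in A while the gap to the (k-1)-th largest lies in J is
  pivot_weight (k - 1) (n - k) A (gap_tail J).\<close>
definition pivot_weight :: "nat \<Rightarrow> nat \<Rightarrow> real set \<Rightarrow> (real \<Rightarrow> real) \<Rightarrow> ennreal" where
  "pivot_weight a b A G = (\<integral>\<^sup>+ y. ennreal (f y * indicator A y * G y ^ a * cdf_of_density f y ^ b) \<partial>lborel)"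

lemma pivot_weight_split:
  assumes [measurable]: "A \<in> sets borel" "G \<in> borel_measurable borel"
  shows "pivot_weight a b UNIV G = pivot_weight a b A G + pivot_weight a b (- A) G"
proof -
  have "pivot_weight a b A G + pivot_weight a b (- A) G
      = (\<integral>\<^sup>+ y. ennreal (f y * indicator A y * G y ^ a * cdf_of_density f y ^ b)
          + ennreal (f y * indicator (- A) y * G y ^ a * cdf_of_density f y ^ b) \<partial>lborel)"
    unfolding pivot_weight_def by (rule nn_integral_add[symmetric]) auto
  also have "\<dots> = pivot_weight a b UNIV G"
    unfolding pivot_weight_def by (intro nn_integral_cong) (auto simp: indicator_def)
  finally show ?thesis by simp
qed

lemma pivot_weight_mono:
  assumes "\<And>y. y \<in> A \<Longrightarrow> 0 \<le> y \<Longrightarrow> G y ^ a \<le> H y ^ a"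
  shows "pivot_weight a b A G \<le> pivot_weight a b A H"
  unfolding pivot_weight_def
proof (intro nn_integral_mono ennreal_leI)
  fix y
  have "f y * cdf_of_density f y ^ b * G y ^ a \<le> f y * cdf_of_density f y ^ b * H y ^ a"
    if "y \<in> A" "0 \<le> y"
    using assms that density_nonneg cdf_nonneg by (intro mult_left_mono) auto
  then show "f y * indicator A y * G y ^ a * cdf_of_density f y ^ b
      \<le> f y * indicator A y * H y ^ a * cdf_of_density f y ^ b"
    using density_eq_0_neg[of y] by (cases "y \<in> A"; cases "0 \<le> y") (auto simp: ac_simps)
qed

lemma pivot_weight_cmult:
  assumes "0 \<le> c" and [measurable]: "A \<in> sets borel" "H \<in> borel_measurable borel"
  shows "pivot_weight a b A (\<lambda>y. c * H y) = ennreal (c ^ a) * pivot_weight a b A H"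
proof -
  have "pivot_weight a b A (\<lambda>y. c * H y)
      = (\<integral>\<^sup>+ y. ennreal (c ^ a) * ennreal (f y * indicator A y * H y ^ a * cdf_of_density f y ^ b) \<partial>lborel)"
    unfolding pivot_weight_def using \<open>0 \<le> c\<close>
    by (intro nn_integral_cong) (simp add: ennreal_mult'[symmetric] power_mult_distrib ac_simps)
  also have "\<dots> = ennreal (c ^ a) * pivot_weight a b A H"
    unfolding pivot_weight_def by (rule nn_integral_cmult) measurable
  finally show ?thesis .
qed

text \<open>Since surv (y + \<beta>) / surv y is non-increasing, a single constant m separates its values on
  the upper set I from those on its complement; compare both weights with m times surv.\<close>
lemma pivot_weight_cross_le:
  assumes I[measurable]: "I \<in> sets borel" and I_upper: "upper_set I" and \<beta>: "0 \<le> \<beta>"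
  shows "pivot_weight a b I (\<lambda>y. surv (y + \<beta>)) * pivot_weight a b (- I) surv
       \<le> pivot_weight a b I surv * pivot_weight a b (- I) (\<lambda>y. surv (y + \<beta>))"
proof -
  define \<psi> where "\<psi> y = surv (y + \<beta>) / surv y" for y
  have \<psi>_nonneg: "0 \<le> \<psi> y" for y
    unfolding \<psi>_def using surv_pos[of y] surv_pos[of "y + \<beta>"] by simp
  have \<psi>_antimono: "\<psi> y \<le> \<psi> x" if "0 \<le> x" "x \<le> y" for x y
    unfolding \<psi>_def using surv_shift_le[OF that \<beta>] surv_pos[of x] surv_pos[of y]
    by (simp add: divide_simps ac_simps)
  have shift_eq: "surv (y + \<beta>) = \<psi> y * surv y" for y
    unfolding \<psi>_def using surv_pos[of y] by simp
  obtain m where m: "0 \<le> m" and m_I: "\<And>x. x \<in> I \<Longrightarrow> 0 \<le> x \<Longrightarrow> \<psi> x \<le> m"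
    and m_compl: "\<And>y. y \<notin> I \<Longrightarrow> 0 \<le> y \<Longrightarrow> m \<le> \<psi> y"
    using upper_set_separating_constant[where \<psi>=\<psi> and I=I, OF I_upper \<psi>_antimono \<psi>_nonneg] by metis
  have surv_meas: "surv \<in> borel_measurable borel"
    using surv_shift_measurable[of 0] by simp
  have "pivot_weight a b I (\<lambda>y. surv (y + \<beta>)) \<le> pivot_weight a b I (\<lambda>y. m * surv y)"
    using m_I \<psi>_nonneg surv_pos[THEN less_imp_le]
    by (intro pivot_weight_mono power_mono) (auto simp: shift_eq intro: mult_right_mono)
  also have "\<dots> = ennreal (m ^ a) * pivot_weight a b I surv"
    using m surv_meas by (simp add: pivot_weight_cmult)
  finally have le_I: "pivot_weight a b I (\<lambda>y. surv (y + \<beta>)) \<le> ennreal (m ^ a) * pivot_weight a b I surv" .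
  have "ennreal (m ^ a) * pivot_weight a b (- I) surv = pivot_weight a b (- I) (\<lambda>y. m * surv y)"
    using m surv_meas by (simp add: pivot_weight_cmult)
  also have "\<dots> \<le> pivot_weight a b (- I) (\<lambda>y. surv (y + \<beta>))"
    using m_compl m surv_pos[THEN less_imp_le]
    by (intro pivot_weight_mono power_mono) (auto simp: shift_eq intro: mult_right_mono)
  finally have le_compl: "ennreal (m ^ a) * pivot_weight a b (- I) surv \<le> pivot_weight a b (- I) (\<lambda>y. surv (y + \<beta>))" .
  have "pivot_weight a b I (\<lambda>y. surv (y + \<beta>)) * pivot_weight a b (- I) surv
      \<le> ennreal (m ^ a) * pivot_weight a b I surv * pivot_weight a b (- I) surv"
    using le_I by (rule mult_right_mono) simp
  also have "\<dots> = pivot_weight a b I surv * (ennreal (m ^ a) * pivot_weight a b (- I) surv)"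
    by (simp add: ac_simps)
  also have "\<dots> \<le> pivot_weight a b I surv * pivot_weight a b (- I) (\<lambda>y. surv (y + \<beta>))"
    using le_compl by (rule mult_left_mono) simp
  finally show ?thesis .
qed

lemma product_sigma_finite_law: "product_sigma_finite (\<lambda>_::nat. law)"
  unfolding product_sigma_finite_def using law.sigma_finite_measure_axioms by simp

lemma measurable_component_law:
  "j \<in> I \<Longrightarrow> (\<lambda>z. z j) \<in> borel_measurable (PiM I (\<lambda>_. law))"
  using measurable_component_singleton[of j I "\<lambda>_. law"]
  unfolding measurable_cong_sets[OF refl sets_law] .

lemma pred_PiM_law_component:
  "i \<in> I \<Longrightarrow> A \<in> sets borel \<Longrightarrow> Measurable.pred (PiM I (\<lambda>_. law)) (\<lambda>z. z i \<in> A)"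
  by (rule pred_sets2[OF _ measurable_component_law])

lemma pred_PiM_law_pair:
  "i \<in> I \<Longrightarrow> j \<in> I \<Longrightarrow> W \<in> sets (borel \<Otimes>\<^sub>M borel) \<Longrightarrow>
    Measurable.pred (PiM I (\<lambda>_. law)) (\<lambda>z. (z i, z j) \<in> W)"
  by (rule pred_sets2[OF _ measurable_Pair[OF measurable_component_law measurable_component_law]])

lemma nn_integral_PiM_law_pivot:
  fixes a :: "real \<Rightarrow> ennreal" and \<psi> :: "nat \<Rightarrow> real \<Rightarrow> real \<Rightarrow> ennreal"
  assumes i: "i < n" and a: "a \<in> borel_measurable borel"
    and \<psi>: "\<And>j. (\<lambda>p. \<psi> j (fst p) (snd p)) \<in> borel_measurable (borel \<Otimes>\<^sub>M borel)"
  shows "(\<integral>\<^sup>+ z. a (z i) * (\<Prod>j\<in>{0..<n}-{i}. \<psi> j (z i) (z j)) \<partial>PiM {0..<n} (\<lambda>_. law))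
       = (\<integral>\<^sup>+ y. ennreal (f y) * (a y * (\<Prod>j\<in>{0..<n}-{i}. \<integral>\<^sup>+ t. \<psi> j y t \<partial>law)) \<partial>lborel)"
proof -
  interpret product_sigma_finite "\<lambda>_::nat. law" by (rule product_sigma_finite_law)
  let ?K = "{0..<n}-{i}"
  have ins: "insert i ?K = {0..<n}" using i by auto
  have \<psi>_section: "\<psi> j y \<in> borel_measurable borel" for j y
    using measurable_Pair2[OF \<psi>[of j], of y] by simp
  have "(\<lambda>z. \<psi> j (z i) (z j)) \<in> borel_measurable (PiM (insert i ?K) (\<lambda>_. law))" if "j \<in> ?K" for j
  proof -
    have "(\<lambda>z. (z i, z j)) \<in> measurable (PiM (insert i ?K) (\<lambda>_. law)) (borel \<Otimes>\<^sub>M borel)"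
      by (rule measurable_Pair; rule measurable_component_law) (use that in auto)
    from measurable_comp[OF this \<psi>[of j]] show ?thesis by (simp add: comp_def)
  qed
  moreover have "(\<lambda>z. a (z i)) \<in> borel_measurable (PiM (insert i ?K) (\<lambda>_. law))"
    using measurable_comp[OF measurable_component_law[of i "insert i ?K"] a] by (simp add: comp_def)
  ultimately have "(\<lambda>z. a (z i) * (\<Prod>j\<in>?K. \<psi> j (z i) (z j))) \<in> borel_measurable (PiM (insert i ?K) (\<lambda>_. law))"
    by (intro borel_measurable_times_ennreal borel_measurable_prod_ennreal; assumption?) simp
  then have "(\<integral>\<^sup>+ z. a (z i) * (\<Prod>j\<in>?K. \<psi> j (z i) (z j)) \<partial>PiM (insert i ?K) (\<lambda>_. law))
     = (\<integral>\<^sup>+ y. (\<integral>\<^sup>+ x. a ((x(i:=y)) i) * (\<Prod>j\<in>?K. \<psi> j ((x(i:=y)) i) ((x(i:=y)) j))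
          \<partial>PiM ?K (\<lambda>_. law)) \<partial>law)"
    by (rule product_nn_integral_insert_rev[rotated 2]) auto
  also have "\<dots> = (\<integral>\<^sup>+ y. a y * (\<integral>\<^sup>+ x. (\<Prod>j\<in>?K. \<psi> j y (x j)) \<partial>PiM ?K (\<lambda>_. law)) \<partial>law)"
  proof (intro nn_integral_cong)
    fix y
    have "(\<integral>\<^sup>+ x. a ((x(i:=y)) i) * (\<Prod>j\<in>?K. \<psi> j ((x(i:=y)) i) ((x(i:=y)) j)) \<partial>PiM ?K (\<lambda>_. law))
        = (\<integral>\<^sup>+ x. a y * (\<Prod>j\<in>?K. \<psi> j y (x j)) \<partial>PiM ?K (\<lambda>_. law))"
      by (intro nn_integral_cong) (auto intro!: prod.cong)
    also have "\<dots> = a y * (\<integral>\<^sup>+ x. (\<Prod>j\<in>?K. \<psi> j y (x j)) \<partial>PiM ?K (\<lambda>_. law))"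
    proof (rule nn_integral_cmult)
      have "(\<lambda>x. \<psi> j y (x j)) \<in> borel_measurable (PiM ?K (\<lambda>_. law))" if "j \<in> ?K" for j
        using measurable_comp[OF measurable_component_law[OF that] \<psi>_section[of j y]]
        by (simp add: comp_def)
      then show "(\<lambda>x. \<Prod>j\<in>?K. \<psi> j y (x j)) \<in> borel_measurable (PiM ?K (\<lambda>_. law))"
        by (intro borel_measurable_prod_ennreal) auto
    qed
    finally show "(\<integral>\<^sup>+ x. a ((x(i:=y)) i) * (\<Prod>j\<in>?K. \<psi> j ((x(i:=y)) i) ((x(i:=y)) j)) \<partial>PiM ?K (\<lambda>_. law))
        = a y * (\<integral>\<^sup>+ x. (\<Prod>j\<in>?K. \<psi> j y (x j)) \<partial>PiM ?K (\<lambda>_. law))" .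
  qed
  also have "\<dots> = (\<integral>\<^sup>+ y. a y * (\<Prod>j\<in>?K. \<integral>\<^sup>+ t. \<psi> j y t \<partial>law) \<partial>law)"
  proof (intro nn_integral_cong arg_cong2[where f="(*)"] refl product_nn_integral_prod)
    fix y j show "\<psi> j y \<in> borel_measurable law"
      using \<psi>_section[of j y] unfolding measurable_cong_sets[OF sets_law refl] .
  qed simp
  also have "\<dots> = (\<integral>\<^sup>+ y. ennreal (f y) * (a y * (\<Prod>j\<in>?K. \<integral>\<^sup>+ t. \<psi> j y t \<partial>law)) \<partial>lborel)"
  proof -
    have "(\<lambda>y. \<integral>\<^sup>+ t. \<psi> j y t \<partial>law) \<in> borel_measurable borel" for j
    proof (rule law.borel_measurable_nn_integral)
      show "case_prod (\<psi> j) \<in> borel_measurable (borel \<Otimes>\<^sub>M law)"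
        using \<psi>[of j] by (simp add: measurable_cong_sets[OF sets_pair_measure_cong[OF refl sets_law] refl]
            case_prod_beta')
    qed
    then have "(\<lambda>y. a y * (\<Prod>j\<in>?K. \<integral>\<^sup>+ t. \<psi> j y t \<partial>law)) \<in> borel_measurable lborel"
      by (intro borel_measurable_times_ennreal borel_measurable_prod_ennreal) (simp_all add: a)
    then show ?thesis
      using density_measurable unfolding law_def by (intro nn_integral_density) simp_all
  qed
  finally show ?thesis unfolding ins .
qed

lemma sets_pivot_pattern:
  assumes i: "i < n" and T: "T \<subseteq> {0..<n}-{i}" and A: "A \<in> sets borel" and J[measurable]: "J \<in> sets borel"
  shows "{z \<in> space (PiM {0..<n} (\<lambda>_. law)). pivot_pattern n A J z i T} \<in> sets (PiM {0..<n} (\<lambda>_. law))"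
proof -
  define W1 where "W1 = {p::real \<times> real. fst p < snd p \<and> snd p - fst p \<in> J}"
  define W2 where "W2 = {p::real \<times> real. snd p \<le> fst p}"
  have "Measurable.pred (borel \<Otimes>\<^sub>M borel) (\<lambda>p::real \<times> real. fst p < snd p \<and> snd p - fst p \<in> J)"
    by measurable
  from predE[OF this] have W1: "W1 \<in> sets (borel \<Otimes>\<^sub>M borel)"
    unfolding W1_def by (simp add: space_pair_measure)
  have "Measurable.pred (borel \<Otimes>\<^sub>M borel) (\<lambda>p::real \<times> real. snd p \<le> fst p)"
    by measurable
  from predE[OF this] have W2: "W2 \<in> sets (borel \<Otimes>\<^sub>M borel)"
    unfolding W2_def by (simp add: space_pair_measure)
  have "finite T" using T finite_subset by blast
  then have "Measurable.pred (PiM {0..<n} (\<lambda>_. law))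
      (\<lambda>z. z i \<in> A \<and> (\<forall>j\<in>T. (z i, z j) \<in> W1) \<and> (\<forall>j\<in>{0..<n}-{i}-T. (z i, z j) \<in> W2))"
    using T i W1 W2 A
    by (intro pred_intros_logic(3) pred_intros_finite(3) pred_PiM_law_pair
        pred_PiM_law_component) auto
  from predE[OF this] show ?thesis unfolding W1_def W2_def pivot_pattern_def by simp
qed

lemma emeasure_PiM_law_pivot_pattern:
  assumes i: "i < n" and T: "T \<subseteq> {0..<n}-{i}" and [measurable]: "A \<in> sets borel" "J \<in> sets borel"
  shows "emeasure (PiM {0..<n} (\<lambda>_. law)) {z \<in> space (PiM {0..<n} (\<lambda>_. law)). pivot_pattern n A J z i T}
       = pivot_weight (card T) (card ({0..<n}-{i}-T)) A (gap_tail J)"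
proof -
  let ?P = "PiM {0..<n} (\<lambda>_. law)"
  let ?K = "{0..<n}-{i}"
  define \<psi> where "\<psi> j x t = (if j \<in> T then (if x < t \<and> t - x \<in> J then 1 else 0)
                                   else (if t \<le> x then 1 else (0::ennreal)))" for j x t
  have \<psi>_meas: "(\<lambda>p. \<psi> j (fst p) (snd p)) \<in> borel_measurable (borel \<Otimes>\<^sub>M borel)" for j
    unfolding \<psi>_def by measurable
  have \<psi>_integral: "(\<integral>\<^sup>+ t. \<psi> j y t \<partial>law)
      = ennreal (if j \<in> T then gap_tail J y else cdf_of_density f y)" for j y
  proof (cases "j \<in> T")
    case True
    have "{t. y < t \<and> t - y \<in> J} \<in> sets law" by measurable
    moreover have "(\<integral>\<^sup>+ t. \<psi> j y t \<partial>law) = (\<integral>\<^sup>+ t. indicator {t. y < t \<and> t - y \<in> J} t \<partial>law)"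
      using True by (intro nn_integral_cong) (auto simp: \<psi>_def indicator_def)
    ultimately show ?thesis using True by (simp add: gap_tail_def law.emeasure_eq_measure)
  next
    case False
    have "(\<integral>\<^sup>+ t. \<psi> j y t \<partial>law) = (\<integral>\<^sup>+ t. indicator {..y} t \<partial>law)"
      using False by (intro nn_integral_cong) (auto simp: \<psi>_def indicator_def)
    then show ?thesis using False by (simp add: cdf_eq_measure law.emeasure_eq_measure)
  qed
  have "emeasure ?P {z \<in> space ?P. pivot_pattern n A J z i T}
      = (\<integral>\<^sup>+ z. indicator A (z i) * (\<Prod>j\<in>?K. \<psi> j (z i) (z j)) \<partial>?P)"
  proof -
    have "indicator {z \<in> space ?P. pivot_pattern n A J z i T} z = indicator A (z i) * (\<Prod>j\<in>?K. \<psi> j (z i) (z j))"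
      if "z \<in> space ?P" for z
    proof -
      have "(\<Prod>j\<in>?K. \<psi> j (z i) (z j))
          = (\<Prod>j\<in>?K. if (if j \<in> T then z i < z j \<and> z j - z i \<in> J else z j \<le> z i) then 1 else 0)"
        by (intro prod.cong) (auto simp: \<psi>_def)
      then show ?thesis
        using that T by (auto simp: prod_if_one_zero indicator_def pivot_pattern_def)
    qed
    then show ?thesis
      using sets_pivot_pattern[OF i T] by (simp flip: nn_integral_indicator cong: nn_integral_cong)
  qed
  also have "\<dots> = (\<integral>\<^sup>+ y. ennreal (f y) * (indicator A y * (\<Prod>j\<in>?K. \<integral>\<^sup>+ t. \<psi> j y t \<partial>law)) \<partial>lborel)"
    by (rule nn_integral_PiM_law_pivot[OF i _ \<psi>_meas]) simp
  also have "\<dots> = pivot_weight (card T) (card ({0..<n}-{i}-T)) A (gap_tail J)"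
    unfolding pivot_weight_def
  proof (intro nn_integral_cong)
    fix y
    have "(\<Prod>j\<in>?K. \<integral>\<^sup>+ t. \<psi> j y t \<partial>law)
        = (\<Prod>j\<in>?K \<inter> {j. j \<in> T}. ennreal (gap_tail J y)) * (\<Prod>j\<in>?K \<inter> - {j. j \<in> T}. ennreal (cdf_of_density f y))"
      unfolding \<psi>_integral by (simp add: prod.If_cases if_distrib)
    also have "?K \<inter> {j. j \<in> T} = T" using T by auto
    also have "?K \<inter> - {j. j \<in> T} = {0..<n}-{i}-T" by auto
    finally show "ennreal (f y) * (indicator A y * (\<Prod>j\<in>?K. \<integral>\<^sup>+ t. \<psi> j y t \<partial>law))
        = ennreal (f y * indicator A y * gap_tail J y ^ card T * cdf_of_density f y ^ card ({0..<n}-{i}-T))"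
      using density_nonneg[of y] cdf_nonneg[of y] measure_nonneg[of law]
      by (simp add: gap_tail_def ennreal_mult' ennreal_mult ennreal_power indicator_def mult.assoc)
  qed
  finally show ?thesis .
qed

lemma emeasure_PiM_law_tie:
  fixes i j n :: nat
  assumes ij: "i < n" "j < n" "i \<noteq> j"
  shows "emeasure (PiM {0..<n} (\<lambda>_. law)) {z \<in> space (PiM {0..<n} (\<lambda>_. law)). z j = z i} = 0"
proof -
  let ?P = "PiM {0..<n} (\<lambda>_. law)"
  let ?K = "{0..<n}-{i}"
  define \<psi> where "\<psi> j' (x::real) (t::real) = (if j' = j then (if t = x then 1 else (0::ennreal)) else 1)" for j' x t
  have \<psi>_meas: "(\<lambda>p. \<psi> j' (fst p) (snd p)) \<in> borel_measurable (borel \<Otimes>\<^sub>M borel)" for j'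
    unfolding \<psi>_def by measurable
  have "closed {p::real \<times> real. snd p = fst p}"
    by (intro closed_Collect_eq continuous_intros)
  then have "{p::real \<times> real. snd p = fst p} \<in> sets (borel \<Otimes>\<^sub>M borel)"
    unfolding borel_prod by (rule borel_closed)
  then have "Measurable.pred ?P (\<lambda>z. (z i, z j) \<in> {p::real \<times> real. snd p = fst p})"
    using ij by (intro pred_PiM_law_pair) auto
  then have E: "{z \<in> space ?P. z j = z i} \<in> sets ?P" by (auto dest: predE)
  have "emeasure ?P {z \<in> space ?P. z j = z i} = (\<integral>\<^sup>+ z. (\<lambda>_. 1) (z i) * (\<Prod>j'\<in>?K. \<psi> j' (z i) (z j')) \<partial>?P)"
    using E ij by (simp flip: nn_integral_indicator cong: nn_integral_cong)
      (intro nn_integral_cong, simp add: \<psi>_def prod.delta indicator_def)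
  also have "\<dots> = (\<integral>\<^sup>+ y. ennreal (f y) * ((\<lambda>_. 1) y * (\<Prod>j'\<in>?K. \<integral>\<^sup>+ t. \<psi> j' y t \<partial>law)) \<partial>lborel)"
    by (rule nn_integral_PiM_law_pivot[OF ij(1) _ \<psi>_meas]) simp
  also have "\<dots> = 0"
  proof -
    have "(\<integral>\<^sup>+ t. \<psi> j y t \<partial>law) = (\<integral>\<^sup>+ t. indicator {y} t \<partial>law)" for y
      by (intro nn_integral_cong) (auto simp: \<psi>_def indicator_def)
    then have "(\<integral>\<^sup>+ t. \<psi> j y t \<partial>law) = emeasure law {y}" for y by simp
    then have "(\<Prod>j'\<in>?K. \<integral>\<^sup>+ t. \<psi> j' y t \<partial>law) = 0" for y
      using ij measure_law_singleton[of y]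
      by (intro prod_zero) (auto simp: law.emeasure_eq_measure intro!: bexI[of _ j])
    then show ?thesis by (simp only: mult_zero_right) simp
  qed
  finally show ?thesis .
qed

end

section \<open>Samples from a density with increasing hazard rate\<close>

lemma mult_add_cross_le:
  fixes a1 a2 b1 b2 :: "'a::ordered_comm_semiring"
  assumes "a1 * b2 \<le> b1 * a2"
  shows "a1 * (b1 + b2) \<le> b1 * (a1 + a2)"
  using add_left_mono[OF assms, of "a1 * b1"] by (simp add: distrib_left mult.commute)

locale ihr_sample = ihr_density f + prob_space M
  for f :: "real \<Rightarrow> real" and M :: "'a measure" +
  fixes X :: "nat \<Rightarrow> 'a \<Rightarrow> real" and n k :: nat
  assumes X_distributed: "\<And>i. i < n \<Longrightarrow> distributed M lborel (X i) (\<lambda>x. ennreal (f x))"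
    and X_indep: "indep_vars (\<lambda>_. borel) X {0..<n}"
    and k: "2 \<le> k" "k \<le> n"
begin

abbreviation kth_stat :: "'a \<Rightarrow> real" where
  "kth_stat \<omega> \<equiv> ord_stat n k (\<lambda>i. X i \<omega>)"

abbreviation spacing :: "'a \<Rightarrow> real" where
  "spacing \<omega> \<equiv> ord_stat n (k - 1) (\<lambda>i. X i \<omega>) - ord_stat n k (\<lambda>i. X i \<omega>)"

abbreviation sample :: "'a \<Rightarrow> nat \<Rightarrow> real" where
  "sample \<omega> \<equiv> \<lambda>i\<in>{0..<n}. X i \<omega>"

lemma X_measurable[measurable]: "i < n \<Longrightarrow> X i \<in> borel_measurable M"
  using distributed_measurable[OF X_distributed] by simp

lemma kth_stat_measurable[measurable]: "kth_stat \<in> borel_measurable M"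
  using k by (intro borel_measurable_ord_stat) auto

lemma spacing_measurable[measurable]: "spacing \<in> borel_measurable M"
  using k by (intro borel_measurable_diff borel_measurable_ord_stat) auto

lemma sets_PiM_law: "sets (PiM {0..<n} (\<lambda>_. law)) = sets (PiM {0..<n} (\<lambda>_::nat. borel :: real measure))"
  by (rule sets_PiM_cong) auto

lemma sample_measurable: "sample \<in> measurable M (PiM {0..<n} (\<lambda>_. law))"
  unfolding measurable_cong_sets[OF refl sets_PiM_law] by (rule measurable_restrict) simp

lemma distr_sample: "distr M (PiM {0..<n} (\<lambda>_. borel)) sample = PiM {0..<n} (\<lambda>_. law)"
proof -
  define X' where "X' i = (if i < n then X i else (\<lambda>_. 0))" for i
  have X': "random_variable borel (X' i)" for i by (simp add: X'_def)
  have "indep_vars (\<lambda>_. borel) X' {0..<n}"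
    using X_indep by (rule indep_vars_cong[THEN iffD1, rotated 3]) (auto simp: X'_def)
  then have "distr M (PiM {0..<n} (\<lambda>_. borel)) (\<lambda>\<omega>. \<lambda>i\<in>{0..<n}. X' i \<omega>)
      = PiM {0..<n} (\<lambda>i. distr M borel (X' i))"
    using indep_vars_iff_distr_eq_PiM[of "{0..<n}", OF _ X'] k by simp
  also have "\<dots> = PiM {0..<n} (\<lambda>_. law)"
  proof (rule PiM_cong)
    fix i assume "i \<in> {0..<n}"
    then have "distr M borel (X' i) = distr M lborel (X i)"
      by (intro distr_cong) (auto simp: X'_def)
    also have "\<dots> = law"
      using distributed_distr_eq_density[OF X_distributed] \<open>i \<in> {0..<n}\<close> by (simp add: law_def)
    finally show "distr M borel (X' i) = law" .
  qed simp
  also have "distr M (PiM {0..<n} (\<lambda>_. borel)) (\<lambda>\<omega>. \<lambda>i\<in>{0..<n}. X' i \<omega>)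
      = distr M (PiM {0..<n} (\<lambda>_. borel)) sample"
    by (rule distr_cong) (auto simp: X'_def restrict_def)
  finally show ?thesis .
qed

lemma emeasure_sample_vimage:
  "B \<in> sets (PiM {0..<n} (\<lambda>_. law)) \<Longrightarrow> emeasure M (sample -` B \<inter> space M) = emeasure (PiM {0..<n} (\<lambda>_. law)) B"
  using emeasure_distr[of sample M "PiM {0..<n} (\<lambda>_. borel)" B] distr_sample sample_measurable
    sets_PiM_law by (simp add: measurable_cong_sets[OF refl sets_PiM_law])

lemma AE_sample_inj: "AE \<omega> in M. inj_on (\<lambda>i. X i \<omega>) {0..<n}"
proof -
  let ?P = "PiM {0..<n} (\<lambda>_. law)"
  have "AE \<omega> in M. X j \<omega> \<noteq> X i \<omega>" if ij: "i < n" "j < n" "i \<noteq> j" for i j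
  proof -
    have "closed {p::real \<times> real. snd p = fst p}"
      by (intro closed_Collect_eq continuous_intros)
    then have "{p::real \<times> real. snd p = fst p} \<in> sets (borel \<Otimes>\<^sub>M borel)"
      unfolding borel_prod by (rule borel_closed)
    then have "Measurable.pred ?P (\<lambda>z. (z i, z j) \<in> {p::real \<times> real. snd p = fst p})"
      using ij by (intro pred_PiM_law_pair) auto
    then have tie: "{z \<in> space ?P. z j = z i} \<in> sets ?P" by (auto dest: predE)
    have "sample -` {z \<in> space ?P. z j = z i} \<inter> space M = {\<omega> \<in> space M. X j \<omega> = X i \<omega>}"
      using measurable_space[OF sample_measurable] ij by auto
    then have "{\<omega> \<in> space M. X j \<omega> = X i \<omega>} \<in> null_sets M"
      using emeasure_sample_vimage[OF tie] emeasure_PiM_law_tie[OF ij]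
        measurable_sets[OF sample_measurable tie] by auto
    then show ?thesis by (rule AE_I') auto
  qed
  then have "AE \<omega> in M. \<forall>i\<in>{0..<n}. \<forall>j\<in>{0..<n}. i \<noteq> j \<longrightarrow> X j \<omega> \<noteq> X i \<omega>"
    by (auto intro!: AE_finite_allI)
  then show ?thesis
    by (rule eventually_mono) (auto simp: inj_on_def)
qed

lemma AE_kth_stat_nonneg: "AE \<omega> in M. 0 \<le> kth_stat \<omega>"
proof -
  have "AE \<omega> in M. 0 \<le> X i \<omega>" if i: "i < n" for i
  proof -
    have "emeasure M (X i -` {..<0} \<inter> space M) = emeasure (distr M lborel (X i)) {..<0}"
      using i by (intro emeasure_distr[symmetric]) simp_all
    also have "\<dots> = emeasure law {..<0}"
      using distributed_distr_eq_density[OF X_distributed[OF i]] by (simp add: law_def)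
    also have "\<dots> = 0"
    proof -
      have "(\<integral>\<^sup>+ t. ennreal (f t) * indicator {..<0} t \<partial>lborel) = (\<integral>\<^sup>+ (t::real). 0 \<partial>lborel)"
        by (rule nn_integral_cong) (auto simp: indicator_def density_eq_0_neg)
      then show ?thesis by (simp add: emeasure_law)
    qed
    finally show ?thesis using i by (intro AE_I'[of "X i -` {..<0} \<inter> space M"]) auto
  qed
  then have "AE \<omega> in M. \<forall>i\<in>{0..<n}. 0 \<le> X i \<omega>"
    by (auto intro!: AE_finite_allI)
  then show ?thesis
  proof (rule eventually_mono)
    fix \<omega> assume "\<forall>i\<in>{0..<n}. 0 \<le> X i \<omega>"
    moreover have "kth_stat \<omega> \<in> (\<lambda>i. X i \<omega>) ` {0..<n}"
      using k by (intro ord_stat_mem) auto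
    ultimately show "0 \<le> kth_stat \<omega>" by auto
  qed
qed

lemma sample_vimage_pivot_pattern:
  assumes c: "(i, T) \<in> pivot_configs n k"
  shows "sample -` {z \<in> space (PiM {0..<n} (\<lambda>_. law)). pivot_pattern n A J z i T} \<inter> space M
       = {\<omega>\<in>space M. pivot_pattern n A J (\<lambda>i. X i \<omega>) i T}"
  using c measurable_space[OF sample_measurable]
  by (auto simp: pivot_configs_def pivot_pattern_def subset_iff)

lemma emeasure_pivot_pattern:
  assumes c: "(i, T) \<in> pivot_configs n k" and A: "A \<in> sets borel" and J: "J \<in> sets borel"
  shows "{\<omega>\<in>space M. pivot_pattern n A J (\<lambda>i. X i \<omega>) i T} \<in> sets M"
    and "emeasure M {\<omega>\<in>space M. pivot_pattern n A J (\<lambda>i. X i \<omega>) i T}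
       = pivot_weight (k - 1) (n - k) A (gap_tail J)"
proof -
  have i: "i < n" and T: "T \<subseteq> {0..<n} - {i}" "card T = k - 1"
    using c by (auto simp: pivot_configs_def)
  note E = sets_pivot_pattern[OF i T(1) A J]
  show "{\<omega>\<in>space M. pivot_pattern n A J (\<lambda>i. X i \<omega>) i T} \<in> sets M"
    using measurable_sets[OF sample_measurable E] sample_vimage_pivot_pattern[OF c] by simp
  have "card ({0..<n} - {i} - T) = card ({0..<n} - {i}) - card T"
    using T by (intro card_Diff_subset) (auto intro: finite_subset)
  then have "card ({0..<n} - {i} - T) = n - k" using T i k by simp
  then show "emeasure M {\<omega>\<in>space M. pivot_pattern n A J (\<lambda>i. X i \<omega>) i T}
      = pivot_weight (k - 1) (n - k) A (gap_tail J)"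
    using emeasure_sample_vimage[OF E] emeasure_PiM_law_pivot_pattern[OF i T(1) A J] T
      sample_vimage_pivot_pattern[OF c] by simp
qed

text \<open>Almost surely the observations are distinct, and then exactly one configuration
  matches the event.\<close>
lemma emeasure_kth_stat_spacing:
  assumes A: "A \<in> sets borel" and J: "J \<in> sets borel" "upper_set J"
  shows "emeasure M {\<omega>\<in>space M. kth_stat \<omega> \<in> A \<and> spacing \<omega> \<in> J}
       = of_nat (card (pivot_configs n k)) * pivot_weight (k - 1) (n - k) A (gap_tail J)"
proof -
  define B where "B c = {\<omega>\<in>space M. case_prod (pivot_pattern n A J (\<lambda>i. X i \<omega>)) c}" for c
  have B: "B c \<in> sets M" "emeasure M (B c) = pivot_weight (k - 1) (n - k) A (gap_tail J)"
    if "c \<in> pivot_configs n k" for c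
  proof -
    obtain i T where "c = (i, T)" by (cases c)
    then show "B c \<in> sets M" "emeasure M (B c) = pivot_weight (k - 1) (n - k) A (gap_tail J)"
      using that emeasure_pivot_pattern[OF _ A J(1), of i T] by (simp_all add: B_def)
  qed
  have "AE \<omega> in M. indicator {\<omega>\<in>space M. kth_stat \<omega> \<in> A \<and> spacing \<omega> \<in> J} \<omega>
      = (\<Sum>c\<in>pivot_configs n k. indicator (B c) \<omega> :: ennreal)"
    using AE_sample_inj AE_space
  proof eventually_elim
    fix \<omega> assume inj: "inj_on (\<lambda>i. X i \<omega>) {0..<n}" and \<omega>: "\<omega> \<in> space M"
    let ?Q = "case_prod (pivot_pattern n A J (\<lambda>i. X i \<omega>))"
    have "(\<Sum>c\<in>pivot_configs n k. indicator (B c) \<omega> :: ennreal)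
        = (\<Sum>c\<in>pivot_configs n k. if ?Q c then 1 else 0)"
      using \<omega> by (intro sum.cong) (auto simp: indicator_def B_def)
    also have "\<dots> = of_nat (card {c \<in> pivot_configs n k. ?Q c})"
      by (simp add: sum.If_cases finite_pivot_configs Int_def conj_commute)
    also have "\<dots> = (if kth_stat \<omega> \<in> A \<and> spacing \<omega> \<in> J then 1 else 0)"
      by (simp add: card_pivot_patterns[OF inj k J(2)])
    finally show "indicator {\<omega>\<in>space M. kth_stat \<omega> \<in> A \<and> spacing \<omega> \<in> J} \<omega>
        = (\<Sum>c\<in>pivot_configs n k. indicator (B c) \<omega> :: ennreal)"
      using \<omega> by (simp add: indicator_def)
  qed
  moreover have "{\<omega>\<in>space M. kth_stat \<omega> \<in> A \<and> spacing \<omega> \<in> J} \<in> sets M"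
    using A J(1) by measurable
  ultimately have "emeasure M {\<omega>\<in>space M. kth_stat \<omega> \<in> A \<and> spacing \<omega> \<in> J}
      = (\<integral>\<^sup>+ \<omega>. (\<Sum>c\<in>pivot_configs n k. indicator (B c) \<omega>) \<partial>M)"
    by (simp flip: nn_integral_indicator cong: nn_integral_cong_AE)
  also have "\<dots> = (\<Sum>c\<in>pivot_configs n k. emeasure M (B c))"
    using B by (simp add: nn_integral_sum)
  also have "\<dots> = of_nat (card (pivot_configs n k)) * pivot_weight (k - 1) (n - k) A (gap_tail J)"
    by (simp add: B)
  finally show ?thesis .
qed

lemma kth_stat_spacing_neg_dependent: "neg_dependent_upper_sets M kth_stat spacing"
unfolding neg_dependent_upper_sets_def
proof (intro allI impI)
  fix I J :: "real set"
  assume I_upper: "upper_set I" and J_upper: "upper_set J" and I: "I \<in> sets borel" and J: "J \<in> sets borel"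
  define c where "c = (of_nat (card (pivot_configs n k)) :: ennreal)"
  let ?w = "pivot_weight (k - 1) (n - k)"
  have UNIV_upper: "upper_set (UNIV :: real set)" by (simp add: upper_set_def)
  have joint: "emeasure M {\<omega>\<in>space M. kth_stat \<omega> \<in> I \<and> spacing \<omega> \<in> J} = c * ?w I (gap_tail J)"
    unfolding c_def by (rule emeasure_kth_stat_spacing[OF I J J_upper])
  have kth: "emeasure M {\<omega>\<in>space M. kth_stat \<omega> \<in> I} = c * ?w I surv"
    using emeasure_kth_stat_spacing[OF I _ UNIV_upper] by (simp add: c_def gap_tail_UNIV[abs_def])
  have gap: "emeasure M {\<omega>\<in>space M. spacing \<omega> \<in> J} = c * ?w UNIV (gap_tail J)"
    using emeasure_kth_stat_spacing[of UNIV, OF _ J J_upper] by (simp add: c_def)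
  have total: "1 = c * ?w UNIV surv"
    using emeasure_kth_stat_spacing[OF _ _ UNIV_upper, of UNIV] emeasure_space_1
    by (simp add: c_def gap_tail_UNIV[abs_def])
  consider "gap_tail J = (\<lambda>_. 0)" | \<beta> where "0 \<le> \<beta>" "gap_tail J = (\<lambda>x. surv (x + \<beta>))"
    using gap_tail_upper_set_cases[OF J J_upper] by fastforce
  then show "emeasure M {\<omega>\<in>space M. kth_stat \<omega> \<in> I \<and> spacing \<omega> \<in> J}
      \<le> emeasure M {\<omega>\<in>space M. kth_stat \<omega> \<in> I} * emeasure M {\<omega>\<in>space M. spacing \<omega> \<in> J}"
  proof cases
    case 1
    have "?w I (gap_tail J) = 0"
      using k by (simp add: 1 pivot_weight_def power_0_left)
    then show ?thesis using joint by simp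
  next
    case 2
    have surv_meas: "surv \<in> borel_measurable borel"
      using surv_shift_measurable[of 0] by simp
    define a1 where "a1 = ?w I (\<lambda>y. surv (y + \<beta>))"
    define a2 where "a2 = ?w (- I) (\<lambda>y. surv (y + \<beta>))"
    define b1 where "b1 = ?w I surv"
    define b2 where "b2 = ?w (- I) surv"
    have split_gap: "?w UNIV (gap_tail J) = a1 + a2"
      unfolding 2 a1_def a2_def by (rule pivot_weight_split[OF I]) simp
    have split_surv: "?w UNIV surv = b1 + b2"
      unfolding b1_def b2_def by (rule pivot_weight_split[OF I surv_meas])
    have cross: "a1 * b2 \<le> b1 * a2"
      unfolding a1_def a2_def b1_def b2_def by (rule pivot_weight_cross_le[OF I I_upper 2(1)])
    have "emeasure M {\<omega>\<in>space M. kth_stat \<omega> \<in> I \<and> spacing \<omega> \<in> J} = c * a1 * 1"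
      using joint by (simp add: 2 a1_def)
    also have "\<dots> = c * a1 * (c * (b1 + b2))"
      using total split_surv by simp
    also have "\<dots> = c * c * (a1 * (b1 + b2))"
      by (simp add: ac_simps)
    also have "\<dots> \<le> c * c * (b1 * (a1 + a2))"
      using mult_add_cross_le[OF cross] by (rule mult_left_mono) simp
    also have "\<dots> = (c * b1) * (c * (a1 + a2))"
      by (simp add: ac_simps)
    also have "\<dots> = emeasure M {\<omega>\<in>space M. kth_stat \<omega> \<in> I} * emeasure M {\<omega>\<in>space M. spacing \<omega> \<in> J}"
      using kth gap split_gap by (simp add: b1_def)
    finally show ?thesis .
  qed
qed

end

theorem mainTheorem9:
  fixes M :: "'a measure" and X :: "nat \<Rightarrow> 'a \<Rightarrow> real" and f :: "real \<Rightarrow> real"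
    and n k :: nat and f1 f2 :: "real \<Rightarrow> real"
  assumes "prob_space M"
    and ihr: "IHR_density f"
    and dist: "\<And>i. i < n \<Longrightarrow> distributed M lborel (X i) (\<lambda>x. ennreal (f x))"
    and indep: "prob_space.indep_vars M (\<lambda>_. borel) X {0..<n}"
    and k: "2 \<le> k" "k \<le> n"
    and f1: "antimono f1" and f2: "antimono f2"
    and int1: "integrable M (\<lambda>\<omega>. f1 (ord_stat n k (\<lambda>i. X i \<omega>)))"
    and int2: "integrable M (\<lambda>\<omega>. f2 (ord_stat n (k - 1) (\<lambda>i. X i \<omega>) - ord_stat n k (\<lambda>i. X i \<omega>)))"
    and int12: "integrable M (\<lambda>\<omega>. f1 (ord_stat n k (\<lambda>i. X i \<omega>)) *
                 f2 (ord_stat n (k - 1) (\<lambda>i. X i \<omega>) - ord_stat n k (\<lambda>i. X i \<omega>)))"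
  shows "(LINT \<omega>|M. f1 (ord_stat n k (\<lambda>i. X i \<omega>)) *
            f2 (ord_stat n (k - 1) (\<lambda>i. X i \<omega>) - ord_stat n k (\<lambda>i. X i \<omega>)))
         \<le> (LINT \<omega>|M. f1 (ord_stat n k (\<lambda>i. X i \<omega>))) *
            (LINT \<omega>|M. f2 (ord_stat n (k - 1) (\<lambda>i. X i \<omega>) - ord_stat n k (\<lambda>i. X i \<omega>)))"
proof -
  interpret ihr_sample f M X n k
    by (intro ihr_sample.intro ihr_density.intro ihr_sample_axioms.intro) (use assms in auto)
  have spacing_nonneg: "AE \<omega> in M. 0 \<le> spacing \<omega>"
    using ord_stat_le_pred[OF k] by simp
  show ?thesis
    using kth_stat_spacing_neg_dependent kth_stat_measurable spacing_measurable AE_kth_stat_nonneg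
      spacing_nonneg f1 f2 int1 int2 int12
    by (rule integral_antimono_mult_le)
qed

end
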